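(* Let $n\geq1$, $\delta,\alpha\geq0$, $\theta\in\left[\frac\alpha2,\alpha\right]$, $\varepsilon\in(0,1)$, $\gamma$ a multi-index, and for $j\in\{0,1\}$ $$I_0^2(j,|\gamma|)=\int_{\mathbb{R}^n}\frac{|\partial_t^j(\lambda_+e^{\lambda_-t}-\lambda_-e^{\lambda_+t})|^2}{|\lambda_+-\lambda_-|^2}|\xi|^{2|\gamma|}\chi(\xi)^2d\xi,\qquad I_1^2(j,|\gamma|)=\int_{\mathbb{R}^n}\frac{|\partial_t^j(e^{\lambda_+t}-e^{\lambda_-t})|^2}{|\lambda_+-\lambda_-|^2}|\xi|^{2|\gamma|}\chi(\xi)^2d\xi.$$ Then for all $t\geq0$, if $\theta>0$: (i) if $n+2|\gamma|>2\alpha$, $I_1(0,|\gamma|)\lesssim(1+t)^{-\frac1\theta\left(\frac n4+\frac{|\gamma|}2-\frac\alpha2\right)}$; (ii) $I_1(1,|\gamma|)\lesssim(1+t)^{-\frac1\theta\left(\frac n4+\frac{|\gamma|}2\right)}$; (iii) $I_0(0,|\gamma|)\lesssim(1+t)^{-\frac1\theta\left(\frac n4+\frac{|\gamma|}2\right)}$; (iv) $I_0(1,|\gamma|)\lesssim(1+t)^{-\frac1\theta\left(\frac n4+\frac{|\gamma|}2+\frac\alpha2\right)}$. If $\alpha=\theta=0$, then $I_i(j,|\gamma|)\lesssim e^{-\frac t4}$ for all $t\geq0$ and $i,j\in\{0,1\}$.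
   Context: $\lambda_\pm=\frac{|\xi|^{2\theta}}{2(1+|\xi|^{2\delta})}\left(-1\pm i\sqrt{4|\xi|^{2(\alpha-2\theta)}(1+|\xi|^{2\delta})-1}\right)$; $\chi$ is the characteristic function of $\{|\xi|<\varepsilon\}$; $\partial_t^j$ is the $j$-th time derivative. $\lesssim$ means $\leq C\cdot$ with $C$ independent of $t$. *)

theory Defs
  imports "HOL-Analysis.Analysis"
begin

text \<open>Real power of a nonnegative radius with the convention r^0 = 1 (also at r = 0).\<close>
definition pw :: "real \<Rightarrow> real \<Rightarrow> real" where
  "pw r a = (if a = 0 then 1 else r powr a)"

definition lam_plus :: "real \<Rightarrow> real \<Rightarrow> real \<Rightarrow> real \<Rightarrow> complex" where
  "lam_plus \<alpha> \<theta> \<delta> r =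
     complex_of_real (pw r (2*\<theta>) / (2 * (1 + pw r (2*\<delta>)))) *
     (-1 + \<i> * csqrt (complex_of_real (4 * pw r (2*(\<alpha> - 2*\<theta>)) * (1 + pw r (2*\<delta>)) - 1)))"

definition lam_minus :: "real \<Rightarrow> real \<Rightarrow> real \<Rightarrow> real \<Rightarrow> complex" where
  "lam_minus \<alpha> \<theta> \<delta> r =
     complex_of_real (pw r (2*\<theta>) / (2 * (1 + pw r (2*\<delta>)))) *
     (-1 - \<i> * csqrt (complex_of_real (4 * pw r (2*(\<alpha> - 2*\<theta>)) * (1 + pw r (2*\<delta>)) - 1)))"

definition chi :: "real \<Rightarrow> 'a::real_normed_vector \<Rightarrow> real" where
  "chi \<epsilon> \<xi> = indicator {\<xi>. norm \<xi> < \<epsilon>} \<xi>"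

definition mi_len :: "('n::finite \<Rightarrow> nat) \<Rightarrow> nat" where
  "mi_len \<gamma> = (\<Sum>i\<in>UNIV. \<gamma> i)"

text \<open>I_0^2(j,|gamma|)(t); the t-derivative is taken of the entire extension in t.\<close>
definition I0sq :: "real \<Rightarrow> real \<Rightarrow> real \<Rightarrow> real \<Rightarrow> ('n::finite \<Rightarrow> nat) \<Rightarrow> nat \<Rightarrow> real \<Rightarrow> real" where
  "I0sq \<alpha> \<theta> \<delta> \<epsilon> \<gamma> j t =
     (LINT \<xi>|(lborel :: (real^'n) measure).
        (let lp = lam_plus \<alpha> \<theta> \<delta> (norm \<xi>); lm = lam_minus \<alpha> \<theta> \<delta> (norm \<xi>) in
          (cmod ((deriv ^^ j) (\<lambda>s::complex. lp * exp (lm * s) - lm * exp (lp * s)) (complex_of_real t)))\<^sup>2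
          / (cmod (lp - lm))\<^sup>2 * norm \<xi> ^ (2 * mi_len \<gamma>) * (chi \<epsilon> \<xi>)\<^sup>2))"

definition I1sq :: "real \<Rightarrow> real \<Rightarrow> real \<Rightarrow> real \<Rightarrow> ('n::finite \<Rightarrow> nat) \<Rightarrow> nat \<Rightarrow> real \<Rightarrow> real" where
  "I1sq \<alpha> \<theta> \<delta> \<epsilon> \<gamma> j t =
     (LINT \<xi>|(lborel :: (real^'n) measure).
        (let lp = lam_plus \<alpha> \<theta> \<delta> (norm \<xi>); lm = lam_minus \<alpha> \<theta> \<delta> (norm \<xi>) in
          (cmod ((deriv ^^ j) (\<lambda>s::complex. exp (lp * s) - exp (lm * s)) (complex_of_real t)))\<^sup>2
          / (cmod (lp - lm))\<^sup>2 * norm \<xi> ^ (2 * mi_len \<gamma>) * (chi \<epsilon> \<xi>)\<^sup>2))"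

definition I0 where "I0 \<alpha> \<theta> \<delta> \<epsilon> \<gamma> j t = sqrt (I0sq \<alpha> \<theta> \<delta> \<epsilon> \<gamma> j t)"
definition I1 where "I1 \<alpha> \<theta> \<delta> \<epsilon> \<gamma> j t = sqrt (I1sq \<alpha> \<theta> \<delta> \<epsilon> \<gamma> j t)"

end

(*
  For |xi| < eps < 1 the roots are complex conjugates lambda_+- = a (-1 +- i sqrt X) with X >= 3
  and |xi|^(2 theta) / 4 <= a <= |xi|^(2 theta) / 2, so |exp (lambda_+- t)| = exp (- a t) and
  |lambda_+ - lambda_-|^2 = 4 a^2 X is comparable to |xi|^(2 alpha).  Each integrand is therefore
  bounded on the ball by a multiple of |xi|^p exp (- |xi|^(2 theta) t / 2), where
  p = 2 |gamma| + k and k is -2 alpha, 0, 0, 2 alpha for the four integrals.  The dilation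
  xi |-> (1 + t)^(1 / (2 theta)) xi turns the integral of such a function into
  (1 + t)^(-(n + p) / (2 theta)) times the integral of |xi|^p exp (- |xi|^(2 theta) / 2), which is
  finite when p > -n; near the origin this is seen by comparing dyadic annuli, which are
  mapped onto each other by dilation.  For alpha = theta = 0
  one has a >= 1/4 on the whole ball, and the integrands are bounded by a multiple of exp (- t / 2).
*)

theory Submission
  imports Defs
begin

section \<open>Radial integrals over Euclidean space\<close>

lemma nn_integral_lborel_dilate:
  fixes f :: "'a::euclidean_space \<Rightarrow> ennreal"
  assumes [measurable]: "f \<in> borel_measurable borel" and "c > 0"
  shows "(\<integral>\<^sup>+x. f x \<partial>lborel) = ennreal (c ^ DIM('a)) * (\<integral>\<^sup>+x. f (c *\<^sub>R x) \<partial>lborel)"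
  using assms(2)
  by (subst lborel_affine [of c 0]) (simp_all add: nn_integral_density nn_integral_distr nn_integral_cmult)

definition annulus_power :: "real \<Rightarrow> real \<Rightarrow> real \<Rightarrow> 'a::real_normed_vector \<Rightarrow> ennreal" where
  "annulus_power q a b x = ennreal (indicator {x. a \<le> norm x \<and> norm x < b} x * norm x powr q)"

lemma annulus_power_measurable [measurable]: "annulus_power q a b \<in> borel_measurable borel"
  unfolding annulus_power_def by measurable

lemma annulus_power_dilate:
  assumes "c > 0"
  shows "annulus_power q (c * a) (c * b) (c *\<^sub>R x) = ennreal (c powr q) * annulus_power q a b x"
proof -
  have "norm (c *\<^sub>R x) powr q = c powr q * norm x powr q"
    using assms by (simp add: powr_mult)
  moreover have "(c * a \<le> c * norm x \<and> c * norm x < c * b) = (a \<le> norm x \<and> norm x < b)"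
    using assms by simp
  ultimately show ?thesis
    using assms by (auto simp: annulus_power_def indicator_def ennreal_mult'[symmetric])
qed

lemma nn_integral_annulus_power_dilate:
  fixes a b c q :: real
  assumes "c > 0"
  shows "(\<integral>\<^sup>+(x::'a::euclidean_space). annulus_power q (c * a) (c * b) x \<partial>lborel) =
         ennreal (c powr (DIM('a) + q)) * (\<integral>\<^sup>+(x::'a). annulus_power q a b x \<partial>lborel)"
proof -
  have "(\<integral>\<^sup>+(x::'a). annulus_power q (c * a) (c * b) x \<partial>lborel)
      = ennreal (c ^ DIM('a)) * (\<integral>\<^sup>+(x::'a). annulus_power q (c * a) (c * b) (c *\<^sub>R x) \<partial>lborel)"
    using assms(1) by (rule nn_integral_lborel_dilate[OF annulus_power_measurable])
  also have "\<dots> = ennreal (c ^ DIM('a)) * (ennreal (c powr q) * (\<integral>\<^sup>+(x::'a). annulus_power q a b x \<partial>lborel))"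
    using assms by (simp add: annulus_power_dilate nn_integral_cmult)
  also have "c ^ DIM('a) * c powr q = c powr (DIM('a) + q)"
    using assms by (simp add: powr_add powr_realpow)
  then have "ennreal (c ^ DIM('a)) * (ennreal (c powr q) * I) = ennreal (c powr (DIM('a) + q)) * I" for I
    using assms by (simp add: ennreal_mult [symmetric] mult.assoc [symmetric])
  finally show ?thesis .
qed

lemma annulus_power_split:
  "a \<le> b \<Longrightarrow> b \<le> d \<Longrightarrow> annulus_power q a b x + annulus_power q b d x = annulus_power q a d x"
  by (cases "norm x < b") (auto simp: annulus_power_def indicator_def)

lemma nn_integral_annulus_power_finite:
  assumes "0 < a"
  shows "(\<integral>\<^sup>+(x::'a::euclidean_space). annulus_power q a b x \<partial>lborel) < \<infinity>"
proof -
  define M where "M = max (a powr q) (b powr q)"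
  have "annulus_power q a b x \<le> ennreal M * indicator (ball 0 b) x" for x :: 'a
  proof (cases "a \<le> norm x \<and> norm x < b")
    case True
    have "norm x powr q \<le> M"
    proof (cases "q \<ge> 0")
      case True
      then have "norm x powr q \<le> b powr q" using \<open>a \<le> norm x \<and> norm x < b\<close>
        by (intro powr_mono2) auto
      then show ?thesis unfolding M_def by linarith
    next
      case False
      then have "norm x powr q \<le> a powr q" using \<open>a \<le> norm x \<and> norm x < b\<close> assms
        by (intro powr_mono2') auto
      then show ?thesis unfolding M_def by linarith
    qed
    then show ?thesis using True by (simp add: annulus_power_def ennreal_leI)
  qed (simp add: annulus_power_def)
  then have "(\<integral>\<^sup>+(x::'a). annulus_power q a b x \<partial>lborel) \<le> (\<integral>\<^sup>+(x::'a). ennreal M * indicator (ball 0 b) x \<partial>lborel)"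
    by (intro nn_integral_mono)
  also have "\<dots> = ennreal M * emeasure lborel (ball (0::'a) b)"
    by (simp add: nn_integral_cmult_indicator)
  also have "\<dots> < \<infinity>"
    using emeasure_lborel_ball_finite[of "0::'a" b] by (simp add: ennreal_mult_less_top)
  finally show ?thesis .
qed

lemma nn_integral_le_of_le_SUP:
  assumes "incseq f" and "\<And>k. f k \<in> borel_measurable M"
    and "\<And>x. g x \<le> (SUP k. f k x)" and "\<And>k. integral\<^sup>N M (f k) \<le> B"
  shows "integral\<^sup>N M g \<le> B"
proof -
  have "integral\<^sup>N M g \<le> (\<integral>\<^sup>+x. (SUP k. f k x) \<partial>M)"
    using assms(3) by (intro nn_integral_mono)
  also have "\<dots> = (SUP k. integral\<^sup>N M (f k))"
    using assms(1,2) by (rule nn_integral_monotone_convergence_SUP)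
  also have "\<dots> \<le> B"
    using assms(4) by (rule SUP_least)
  finally show ?thesis .
qed

lemma annulus_power_geometric_split:
  assumes "0 < h"
  shows "annulus_power q (min 1 (h ^ Suc k)) (max 1 (h ^ Suc k)) x =
         annulus_power q (min 1 h) (max 1 h) x + annulus_power q (h * min 1 (h ^ k)) (h * max 1 (h ^ k)) x"
proof (cases "h \<le> 1")
  case True
  have hk: "h ^ k \<le> 1"
    using True assms by (simp add: power_le_one)
  then have "h ^ Suc k \<le> h" "h ^ Suc k \<le> 1"
    using True assms by (simp_all add: mult_left_le mult_le_one)
  with hk show ?thesis
    using True annulus_power_split[of "h ^ Suc k" h 1 q x] by (simp add: add.commute)
next
  case False
  then have hk: "1 \<le> h ^ k"
    by (simp add: one_le_power)
  have "h \<le> h ^ Suc k"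
    using False hk by (simp add: mult_le_cancel_left1)
  moreover have "1 \<le> h ^ Suc k"
    using False by (intro one_le_power) simp
  ultimately show ?thesis
    using hk False annulus_power_split[of 1 h "h ^ Suc k" q x] by simp
qed

text \<open>For \<open>h < 1\<close> these are the annuli \<open>h^k \<le> |x| < 1\<close>, for \<open>h > 1\<close> the annuli
  \<open>1 \<le> |x| < h^k\<close>.  Each is the first one together with the \<open>h\<close>-dilate of its predecessor,
  so their integrals satisfy \<open>v (k + 1) = v 1 + h powr (n + q) * v k\<close>.\<close>

lemma nn_integral_geometric_annuli_bounded:
  fixes q h :: real
  assumes "0 < h" and "h powr (DIM('a) + q) < 1"
  obtains B where
    "\<And>k. (\<integral>\<^sup>+(x::'a::euclidean_space). annulus_power q (min 1 (h ^ k)) (max 1 (h ^ k)) x \<partial>lborel) \<le> ennreal B"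
proof -
  define \<rho> where "\<rho> = h powr (DIM('a) + q)"
  define v where "v k = (\<integral>\<^sup>+(x::'a). annulus_power q (min 1 (h ^ k)) (max 1 (h ^ k)) x \<partial>lborel)" for k
  define m where "m = enn2real (v 1)"
  have "v 1 < \<infinity>"
    unfolding v_def using assms(1) by (intro nn_integral_annulus_power_finite) simp
  then have m: "v 1 = ennreal m"
    unfolding m_def by simp
  have \<rho>: "0 \<le> \<rho>" "\<rho> < 1"
    unfolding \<rho>_def using assms(2) by simp_all
  have step: "v (Suc k) = v 1 + ennreal \<rho> * v k" for k
  proof -
    have "v (Suc k) = v 1 + (\<integral>\<^sup>+(x::'a). annulus_power q (h * min 1 (h ^ k)) (h * max 1 (h ^ k)) x \<partial>lborel)"
      unfolding v_def annulus_power_geometric_split[OF assms(1)] by (simp add: nn_integral_add)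
    then show ?thesis
      unfolding v_def \<rho>_def using assms(1) by (simp add: nn_integral_annulus_power_dilate)
  qed
  have "v k \<le> ennreal (m / (1 - \<rho>))" for k
  proof (induction k)
    case 0
    then show ?case by (simp add: v_def annulus_power_def)
  next
    case (Suc k)
    have "v (Suc k) \<le> ennreal m + ennreal \<rho> * ennreal (m / (1 - \<rho>))"
      unfolding step m using Suc by (intro add_left_mono mult_left_mono) auto
    also have "\<dots> = ennreal (m + \<rho> * (m / (1 - \<rho>)))"
    proof -
      have "0 \<le> m / (1 - \<rho>)"
        using \<rho> by (simp add: m_def)
      then have "ennreal \<rho> * ennreal (m / (1 - \<rho>)) = ennreal (\<rho> * (m / (1 - \<rho>)))"
        by (rule ennreal_mult [OF \<rho>(1), symmetric])
      then show ?thesis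
        using \<open>0 \<le> m / (1 - \<rho>)\<close> \<rho> by (simp add: ennreal_plus m_def)
    qed
    also have "m + \<rho> * (m / (1 - \<rho>)) = m / (1 - \<rho>)"
      using \<rho> by (simp add: field_simps)
    finally show ?case .
  qed
  then show ?thesis
    using that unfolding v_def by blast
qed

lemma nn_integral_annulus_power_ball_finite:
  assumes "- real DIM('a) < q"
  shows "(\<integral>\<^sup>+(x::'a::euclidean_space). annulus_power q 0 1 x \<partial>lborel) < \<infinity>"
proof -
  define h :: real where "h = 1 / 2"
  have h: "0 < h" "h < 1"
    unfolding h_def by simp_all
  then have "h powr (DIM('a) + q) < 1"
    using assms powr_less_mono'[of h 0 "DIM('a) + q"] by simp
  with h(1) obtain B where B:
    "\<And>k. (\<integral>\<^sup>+(x::'a). annulus_power q (min 1 (h ^ k)) (max 1 (h ^ k)) x \<partial>lborel) \<le> ennreal B"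
    using nn_integral_geometric_annuli_bounded[of h q] by blast
  have hk: "min 1 (h ^ k) = h ^ k" "max 1 (h ^ k) = 1" for k
    using h by (simp_all add: power_le_one)
  have "(\<integral>\<^sup>+(x::'a). annulus_power q 0 1 x \<partial>lborel) \<le> ennreal B"
  proof (rule nn_integral_le_of_le_SUP)
    show "incseq (\<lambda>k. annulus_power q (min 1 (h ^ k)) (max 1 (h ^ k)) :: 'a \<Rightarrow> ennreal)"
      unfolding hk
    proof (intro incseq_SucI le_funI)
      fix k and x :: 'a
      have "h ^ Suc k \<le> h ^ k"
        using h by (simp add: power_decreasing)
      then show "annulus_power q (h ^ k) 1 x \<le> annulus_power q (h ^ Suc k) 1 x"
        by (auto simp: annulus_power_def indicator_def)
    qed
    show "annulus_power q 0 1 x \<le> (SUP k. annulus_power q (min 1 (h ^ k)) (max 1 (h ^ k)) x)" for x :: 'a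
    proof (cases "x = 0")
      case False
      then obtain k where "h ^ k < norm x"
        using real_arch_pow_inv[of "norm x" h] h by auto
      then have "annulus_power q 0 1 x = annulus_power q (min 1 (h ^ k)) (max 1 (h ^ k)) x"
        unfolding hk by (simp add: annulus_power_def indicator_def)
      then show ?thesis
        using SUP_upper[of k UNIV "\<lambda>k. annulus_power q (min 1 (h ^ k)) (max 1 (h ^ k)) x"] by simp
    qed (simp add: annulus_power_def)
  qed (use B in simp_all)
  then show ?thesis
    by (rule le_less_trans) simp
qed

lemma nn_integral_power_exterior_finite:
  assumes "q < - real DIM('a)"
  shows "(\<integral>\<^sup>+(x::'a::euclidean_space). ennreal (indicator {x. 1 \<le> norm x} x * norm x powr q) \<partial>lborel) < \<infinity>"
proof -
  define h :: real where "h = 2"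
  have h: "0 < h" "1 < h"
    unfolding h_def by simp_all
  then have "h powr (DIM('a) + q) < 1"
    using assms by (intro powr_less_one) simp_all
  with h(1) obtain B where B:
    "\<And>k. (\<integral>\<^sup>+(x::'a). annulus_power q (min 1 (h ^ k)) (max 1 (h ^ k)) x \<partial>lborel) \<le> ennreal B"
    using nn_integral_geometric_annuli_bounded[of h q] by blast
  have hk: "min 1 (h ^ k) = 1" "max 1 (h ^ k) = h ^ k" for k
    using h by (simp_all add: one_le_power)
  have "(\<integral>\<^sup>+(x::'a). ennreal (indicator {x. 1 \<le> norm x} x * norm x powr q) \<partial>lborel) \<le> ennreal B"
  proof (rule nn_integral_le_of_le_SUP)
    show "incseq (\<lambda>k. annulus_power q (min 1 (h ^ k)) (max 1 (h ^ k)) :: 'a \<Rightarrow> ennreal)"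
      unfolding hk
    proof (intro incseq_SucI le_funI)
      fix k and x :: 'a
      have "h ^ k \<le> h ^ Suc k"
        using h by simp
      then show "annulus_power q 1 (h ^ k) x \<le> annulus_power q 1 (h ^ Suc k) x"
        by (auto simp: annulus_power_def indicator_def)
    qed
    fix x :: 'a
    obtain k where "norm x < h ^ k"
      using real_arch_pow[OF h(2)] by blast
    then have "ennreal (indicator {x. 1 \<le> norm x} x * norm x powr q) = annulus_power q (min 1 (h ^ k)) (max 1 (h ^ k)) x"
      unfolding hk by (simp add: annulus_power_def indicator_def)
    then show "ennreal (indicator {x. 1 \<le> norm x} x * norm x powr q) \<le> (SUP k. annulus_power q (min 1 (h ^ k)) (max 1 (h ^ k)) x)"
      using SUP_upper[of k UNIV "\<lambda>k. annulus_power q (min 1 (h ^ k)) (max 1 (h ^ k)) x"] by simp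
  qed (use B in simp_all)
  then show ?thesis
    by (rule le_less_trans) simp
qed

lemma powr_mult_exp_neg_le:
  fixes m u :: real
  assumes "0 < m" "0 < u"
  shows "u powr m * exp (- u) \<le> exp (m * ln m - m)"
proof -
  have "ln (u / m) \<le> u / m - 1"
    using assms by (intro ln_le_minus_one) simp
  then have "m * ln (u / m) \<le> m * (u / m - 1)"
    using assms by (intro mult_left_mono) auto
  then have "m * ln u - u \<le> m * ln m - m"
    using assms by (simp add: ln_div right_diff_distrib)
  moreover have "u powr m * exp (- u) = exp (m * ln u - u)"
    using assms by (simp add: powr_def exp_diff exp_minus field_simps)
  ultimately show ?thesis
    by simp
qed

lemma powr_mult_exp_neg_powr_le:
  fixes r p e \<kappa> \<theta> :: real
  assumes "0 < r" "0 < \<kappa>" "0 < \<theta>" "0 < p + e"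
  defines "m \<equiv> (p + e) / (2 * \<theta>)"
  shows "r powr p * exp (- \<kappa> * r powr (2 * \<theta>)) \<le> exp (m * ln m - m) * \<kappa> powr (- m) * r powr (- e)"
proof -
  define u where "u = \<kappa> * r powr (2 * \<theta>)"
  have "0 < m" "0 < u"
    using assms by (simp_all add: m_def u_def)
  then have "exp (- u) \<le> exp (m * ln m - m) / u powr m"
    using powr_mult_exp_neg_le[of m u] by (simp add: field_simps)
  also have "u powr m = \<kappa> powr m * r powr (p + e)"
    using assms by (simp add: u_def m_def powr_mult powr_powr)
  finally have "r powr p * exp (- u) \<le> r powr p * (exp (m * ln m - m) / (\<kappa> powr m * r powr (p + e)))"
    by (intro mult_left_mono) auto
  also have "\<dots> = exp (m * ln m - m) * \<kappa> powr (- m) * r powr (- e)"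
    using assms by (simp add: powr_add powr_minus field_simps)
  finally show ?thesis
    by (simp add: u_def)
qed

lemma nn_integral_power_exp_finite:
  assumes "- real DIM('a) < p" "0 < \<kappa>" "0 < \<theta>"
  shows "(\<integral>\<^sup>+(y::'a::euclidean_space). ennreal (norm y powr p * exp (- \<kappa> * norm y powr (2 * \<theta>))) \<partial>lborel) < \<infinity>"
proof -
  define e where "e = real DIM('a) + 1"
  define m where "m = (p + e) / (2 * \<theta>)"
  define C where "C = exp (m * ln m - m) * \<kappa> powr (- m)"
  have "0 < p + e"
    using assms(1) by (simp add: e_def)
  have "0 \<le> C"
    by (simp add: C_def)
  have "ennreal (norm y powr p * exp (- \<kappa> * norm y powr (2 * \<theta>)))
      \<le> annulus_power p 0 1 y + ennreal C * ennreal (indicator {x. 1 \<le> norm x} y * norm y powr (- e))" for y :: 'a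
  proof (cases "norm y < 1")
    case True
    then have "norm y powr p * exp (- \<kappa> * norm y powr (2 * \<theta>)) \<le> norm y powr p"
      using assms by (intro mult_left_le) auto
    then show ?thesis
      using True by (simp add: annulus_power_def add_increasing2)
  next
    case False
    then have "norm y powr p * exp (- \<kappa> * norm y powr (2 * \<theta>)) \<le> C * norm y powr (- e)"
      unfolding C_def m_def using assms \<open>0 < p + e\<close> by (intro powr_mult_exp_neg_powr_le) auto
    then show ?thesis
      using False \<open>0 \<le> C\<close> by (simp add: annulus_power_def ennreal_mult' [symmetric] add_increasing)
  qed
  then have "(\<integral>\<^sup>+(y::'a). ennreal (norm y powr p * exp (- \<kappa> * norm y powr (2 * \<theta>))) \<partial>lborel)
      \<le> (\<integral>\<^sup>+(y::'a). annulus_power p 0 1 y + ennreal C * ennreal (indicator {x. 1 \<le> norm x} y * norm y powr (- e)) \<partial>lborel)"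
    by (intro nn_integral_mono)
  also have "\<dots> = (\<integral>\<^sup>+(y::'a). annulus_power p 0 1 y \<partial>lborel)
      + ennreal C * (\<integral>\<^sup>+(y::'a). ennreal (indicator {x. 1 \<le> norm x} y * norm y powr (- e)) \<partial>lborel)"
    by (simp add: nn_integral_add nn_integral_cmult)
  also have "\<dots> < \<infinity>"
    using nn_integral_annulus_power_ball_finite[OF assms(1)] nn_integral_power_exterior_finite[where 'a='a and q="- e"]
    by (simp add: e_def ennreal_mult_less_top)
  finally show ?thesis .
qed

lemma nn_integral_power_exp_dilate:
  fixes p \<kappa> \<theta> s :: real
  assumes "0 < s" "0 < \<theta>"
  shows "(\<integral>\<^sup>+(x::'a::euclidean_space). ennreal (norm x powr p * exp (- \<kappa> * s * norm x powr (2 * \<theta>))) \<partial>lborel)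
       = ennreal (s powr (- (DIM('a) + p) / (2 * \<theta>)))
         * (\<integral>\<^sup>+(y::'a). ennreal (norm y powr p * exp (- \<kappa> * norm y powr (2 * \<theta>))) \<partial>lborel)"
proof -
  define d where "d = s powr (- 1 / (2 * \<theta>))"
  have "d powr (2 * \<theta>) = s powr (- 1)"
    using assms by (simp add: d_def powr_powr)
  then have d: "0 < d" "s * d powr (2 * \<theta>) = 1"
    using assms by (simp_all add: d_def powr_minus)
  have scale: "ennreal (norm (d *\<^sub>R y) powr p * exp (- \<kappa> * s * norm (d *\<^sub>R y) powr (2 * \<theta>)))
      = ennreal (d powr p) * ennreal (norm y powr p * exp (- \<kappa> * norm y powr (2 * \<theta>)))" for y :: 'a
  proof -
    have "s * norm (d *\<^sub>R y) powr (2 * \<theta>) = norm y powr (2 * \<theta>)"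
      using d by (simp add: powr_mult)
    then show ?thesis
      using d by (simp add: powr_mult ennreal_mult [symmetric] mult.assoc)
  qed
  have "(\<integral>\<^sup>+(x::'a). ennreal (norm x powr p * exp (- \<kappa> * s * norm x powr (2 * \<theta>))) \<partial>lborel)
      = ennreal (d ^ DIM('a)) * (\<integral>\<^sup>+(y::'a). ennreal (norm (d *\<^sub>R y) powr p * exp (- \<kappa> * s * norm (d *\<^sub>R y) powr (2 * \<theta>))) \<partial>lborel)"
    using d(1) by (intro nn_integral_lborel_dilate) simp_all
  also have "\<dots> = ennreal (d ^ DIM('a)) * (ennreal (d powr p) * (\<integral>\<^sup>+(y::'a). ennreal (norm y powr p * exp (- \<kappa> * norm y powr (2 * \<theta>))) \<partial>lborel))"
    unfolding scale by (subst nn_integral_cmult) auto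
  also have "d ^ DIM('a) * d powr p = s powr (- (DIM('a) + p) / (2 * \<theta>))"
    using assms d(1) by (simp add: d_def powr_realpow [symmetric] powr_add [symmetric] powr_powr field_simps)
  then have "ennreal (d ^ DIM('a)) * (ennreal (d powr p) * I) = ennreal (s powr (- (DIM('a) + p) / (2 * \<theta>))) * I" for I
    using d(1) by (simp add: ennreal_mult [symmetric] mult.assoc [symmetric])
  finally show ?thesis .
qed

lemma nn_integral_ball_power_exp_decay:
  fixes p \<kappa> \<theta> \<epsilon> :: real
  assumes "- real DIM('a) < p" "0 < \<kappa>" "0 < \<theta>"
  obtains K where "0 \<le> K" and
    "\<And>t. 0 \<le> t \<Longrightarrow>
      (\<integral>\<^sup>+(x::'a::euclidean_space). ennreal (indicator {x. norm x < \<epsilon>} x * norm x powr p * exp (- \<kappa> * t * norm x powr (2 * \<theta>))) \<partial>lborel)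
      \<le> ennreal (K * (1 + t) powr (- (DIM('a) + p) / (2 * \<theta>)))"
proof
  define G where "G = (\<integral>\<^sup>+(y::'a). ennreal (norm y powr p * exp (- \<kappa> * norm y powr (2 * \<theta>))) \<partial>lborel)"
  define M where "M = exp (\<kappa> * \<epsilon> powr (2 * \<theta>))"
  show "0 \<le> M * enn2real G"
    by (simp add: M_def)
  fix t :: real
  assume "0 \<le> t"
  have "ennreal (indicator {x. norm x < \<epsilon>} x * norm x powr p * exp (- \<kappa> * t * norm x powr (2 * \<theta>)))
      \<le> ennreal M * ennreal (norm x powr p * exp (- \<kappa> * (1 + t) * norm x powr (2 * \<theta>)))" for x :: 'a
  proof (cases "norm x < \<epsilon>")
    case True
    then have "\<kappa> * norm x powr (2 * \<theta>) \<le> \<kappa> * \<epsilon> powr (2 * \<theta>)"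
      using assms(2,3) by (intro mult_left_mono powr_mono2) auto
    then have exp_le: "exp (- \<kappa> * t * norm x powr (2 * \<theta>)) \<le> M * exp (- \<kappa> * (1 + t) * norm x powr (2 * \<theta>))"
      by (simp add: M_def exp_add [symmetric] algebra_simps)
    then have "norm x powr p * exp (- \<kappa> * t * norm x powr (2 * \<theta>)) \<le> M * (norm x powr p * exp (- \<kappa> * (1 + t) * norm x powr (2 * \<theta>)))"
      using mult_left_mono[OF exp_le, of "norm x powr p"] by (simp add: mult.left_commute)
    then show ?thesis
      using True by (simp add: M_def ennreal_mult [symmetric] ennreal_leI)
  qed simp
  then have "(\<integral>\<^sup>+(x::'a). ennreal (indicator {x. norm x < \<epsilon>} x * norm x powr p * exp (- \<kappa> * t * norm x powr (2 * \<theta>))) \<partial>lborel)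
      \<le> (\<integral>\<^sup>+(x::'a). ennreal M * ennreal (norm x powr p * exp (- \<kappa> * (1 + t) * norm x powr (2 * \<theta>))) \<partial>lborel)"
    by (intro nn_integral_mono)
  also have "\<dots> = ennreal M * (\<integral>\<^sup>+(x::'a). ennreal (norm x powr p * exp (- \<kappa> * (1 + t) * norm x powr (2 * \<theta>))) \<partial>lborel)"
    by (subst nn_integral_cmult) auto
  also have "\<dots> = ennreal M * (ennreal ((1 + t) powr (- (DIM('a) + p) / (2 * \<theta>))) * G)"
    unfolding G_def using \<open>0 \<le> t\<close> assms(3) by (subst nn_integral_power_exp_dilate) auto
  also have "G = ennreal (enn2real G)"
    using nn_integral_power_exp_finite[OF assms] unfolding G_def by simp
  also have "ennreal M * (ennreal ((1 + t) powr (- (DIM('a) + p) / (2 * \<theta>))) * ennreal (enn2real G))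
      = ennreal (M * enn2real G * (1 + t) powr (- (DIM('a) + p) / (2 * \<theta>)))"
    by (simp add: M_def ennreal_mult [symmetric] mult_ac)
  finally show "(\<integral>\<^sup>+(x::'a). ennreal (indicator {x. norm x < \<epsilon>} x * norm x powr p * exp (- \<kappa> * t * norm x powr (2 * \<theta>))) \<partial>lborel)
      \<le> ennreal (M * enn2real G * (1 + t) powr (- (DIM('a) + p) / (2 * \<theta>)))" .
qed

lemma sqrt_integral_power_exp_decay:
  fixes F :: "real \<Rightarrow> 'a::euclidean_space \<Rightarrow> real" and p \<kappa> \<theta> \<epsilon> c :: real
  assumes "- real DIM('a) < p" "0 < \<kappa>" "0 < \<theta>" "0 \<le> c"
    and F: "\<And>t \<xi>. 0 \<le> t \<Longrightarrow>
      F t \<xi> \<le> c * (indicator {x. norm x < \<epsilon>} \<xi> * norm \<xi> powr p * exp (- \<kappa> * t * norm \<xi> powr (2 * \<theta>)))"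
  shows "\<exists>C. \<forall>t\<ge>0. sqrt (LINT \<xi>|lborel. F t \<xi>) \<le> C * (1 + t) powr (- (DIM('a) + p) / (4 * \<theta>))"
proof -
  obtain K where "0 \<le> K" and K: "\<And>t. 0 \<le> t \<Longrightarrow>
      (\<integral>\<^sup>+(x::'a). ennreal (indicator {x. norm x < \<epsilon>} x * norm x powr p * exp (- \<kappa> * t * norm x powr (2 * \<theta>))) \<partial>lborel)
      \<le> ennreal (K * (1 + t) powr (- (DIM('a) + p) / (2 * \<theta>)))"
    using nn_integral_ball_power_exp_decay[OF assms(1-3)] by blast
  define e where "e = - (DIM('a) + p) / (2 * \<theta>)"
  have "sqrt (LINT \<xi>|lborel. F t \<xi>) \<le> sqrt (c * K) * (1 + t) powr (e / 2)" if "0 \<le> t" for t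
  proof -
    have "(\<integral>\<^sup>+\<xi>. ennreal (F t \<xi>) \<partial>lborel)
        \<le> (\<integral>\<^sup>+(\<xi>::'a). ennreal c * ennreal (indicator {x. norm x < \<epsilon>} \<xi> * norm \<xi> powr p * exp (- \<kappa> * t * norm \<xi> powr (2 * \<theta>))) \<partial>lborel)"
      using F[OF that] assms(4) by (intro nn_integral_mono) (simp add: ennreal_mult [symmetric] ennreal_leI)
    also have "\<dots> = ennreal c * (\<integral>\<^sup>+(\<xi>::'a). ennreal (indicator {x. norm x < \<epsilon>} \<xi> * norm \<xi> powr p * exp (- \<kappa> * t * norm \<xi> powr (2 * \<theta>))) \<partial>lborel)"
      by (subst nn_integral_cmult) auto
    also have "\<dots> \<le> ennreal c * ennreal (K * (1 + t) powr e)"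
      unfolding e_def using K[OF that] by (rule mult_left_mono) simp
    also have "\<dots> = ennreal (c * K * (1 + t) powr e)"
      using assms(4) \<open>0 \<le> K\<close> by (simp add: ennreal_mult [symmetric] mult.assoc)
    finally have "(LINT \<xi>|lborel. F t \<xi>) \<le> c * K * (1 + t) powr e"
      using assms(4) \<open>0 \<le> K\<close> by (intro integral_real_bounded) auto
    then have "sqrt (LINT \<xi>|lborel. F t \<xi>) \<le> sqrt (c * K) * sqrt ((1 + t) powr e)"
      by (simp add: real_sqrt_mult [symmetric])
    also have "sqrt ((1 + t) powr e) = (1 + t) powr (e / 2)"
      using that by (simp add: powr_half_sqrt_powr)
    finally show ?thesis .
  qed
  moreover have "e / 2 = - (DIM('a) + p) / (4 * \<theta>)"
    by (simp add: e_def)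
  ultimately show ?thesis
    by auto
qed

lemma integral_le_measure_ball:
  fixes F :: "'a::euclidean_space \<Rightarrow> real"
  assumes "0 \<le> c" and "\<And>\<xi>. F \<xi> \<le> c * indicator {x. norm x < \<epsilon>} \<xi>"
  shows "(LINT \<xi>|lborel. F \<xi>) \<le> c * measure lborel (ball (0::'a) \<epsilon>)"
proof (rule integral_real_bounded)
  have "ennreal (F \<xi>) \<le> ennreal c * indicator (ball 0 \<epsilon>) \<xi>" for \<xi> :: 'a
  proof -
    have "ennreal (F \<xi>) \<le> ennreal (c * indicator (ball 0 \<epsilon>) \<xi>)"
      using assms(2)[of \<xi>] by (intro ennreal_leI) (simp add: indicator_def dist_norm)
    then show ?thesis
      by (cases "\<xi> \<in> ball 0 \<epsilon>") simp_all
  qed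
  then have "(\<integral>\<^sup>+\<xi>. ennreal (F \<xi>) \<partial>lborel) \<le> (\<integral>\<^sup>+(\<xi>::'a). ennreal c * indicator (ball 0 \<epsilon>) \<xi> \<partial>lborel)"
    by (intro nn_integral_mono)
  also have "\<dots> = ennreal c * emeasure lborel (ball (0::'a) \<epsilon>)"
    by (simp add: nn_integral_cmult_indicator)
  also have "\<dots> = ennreal (c * measure lborel (ball (0::'a) \<epsilon>))"
    using assms(1) emeasure_lborel_ball_finite[of "0::'a" \<epsilon>]
    by (simp add: emeasure_eq_ennreal_measure ennreal_mult)
  finally show "(\<integral>\<^sup>+\<xi>. ennreal (F \<xi>) \<partial>lborel) \<le> ennreal (c * measure lborel (ball (0::'a) \<epsilon>))" .
qed (use assms(1) in simp)


section \<open>The characteristic roots\<close>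

lemma power2_norm_diff_div_le:
  fixes u v :: "'a::real_normed_vector"
  assumes "norm u \<le> M" "norm v \<le> M" "0 < D"
  shows "(norm (u - v))\<^sup>2 / D \<le> 4 * M\<^sup>2 / D"
proof -
  have "norm (u - v) \<le> 2 * M"
    using norm_triangle_ineq4[of u v] assms by simp
  then have "(norm (u - v))\<^sup>2 \<le> (2 * M)\<^sup>2"
    by (intro power_mono) auto
  then show ?thesis
    using assms by (simp add: divide_right_mono power_mult_distrib)
qed

lemma conjugate_roots_quotients_le:
  fixes a X t :: real
  assumes "0 < a" "3 \<le> X"
  defines "lp \<equiv> complex_of_real a * (- 1 + \<i> * complex_of_real (sqrt X))"
    and "lm \<equiv> complex_of_real a * (- 1 - \<i> * complex_of_real (sqrt X))"
  shows "(cmod (exp (lp * t) - exp (lm * t)))\<^sup>2 / (cmod (lp - lm))\<^sup>2 \<le> exp (- 2 * a * t) / (a\<^sup>2 * X)"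
    and "(cmod (lp * exp (lp * t) - lm * exp (lm * t)))\<^sup>2 / (cmod (lp - lm))\<^sup>2 \<le> 4 / 3 * exp (- 2 * a * t)"
    and "(cmod (lp * exp (lm * t) - lm * exp (lp * t)))\<^sup>2 / (cmod (lp - lm))\<^sup>2 \<le> 4 / 3 * exp (- 2 * a * t)"
    and "(cmod (lp * (lm * exp (lm * t)) - lm * (lp * exp (lp * t))))\<^sup>2 / (cmod (lp - lm))\<^sup>2
           \<le> 4 / 3 * (a\<^sup>2 * (1 + X)) * exp (- 2 * a * t)"
proof -
  define e where "e = exp (- a * t)"
  have e: "0 \<le> e" "e\<^sup>2 = exp (- 2 * a * t)"
    unfolding e_def by (simp_all add: power2_eq_square exp_add [symmetric])
  have re_im: "Re lp = - a" "Re lm = - a" "Im lp = a * sqrt X" "Im lm = - a * sqrt X"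
    by (simp_all add: lp_def lm_def)
  have "a\<^sup>2 + (a * sqrt X)\<^sup>2 = a\<^sup>2 * (1 + X)"
    using assms(2) by (simp add: power_mult_distrib algebra_simps)
  then have "sqrt (a\<^sup>2 + (a * sqrt X)\<^sup>2) = a * sqrt (1 + X)"
    using assms(1) by (simp add: real_sqrt_mult)
  then have norm_roots: "cmod lp = a * sqrt (1 + X)" "cmod lm = a * sqrt (1 + X)"
    using re_im by (simp_all add: norm_complex_def)
  have norm_exps: "cmod (exp (lp * t)) = e" "cmod (exp (lm * t)) = e"
    using re_im by (simp_all add: e_def)
  have gap: "(cmod (lp - lm))\<^sup>2 = 4 * (a\<^sup>2 * X)"
    using re_im assms(2) by (simp add: norm_complex_def power_mult_distrib)
  have quotient: "(cmod (u - v))\<^sup>2 / (cmod (lp - lm))\<^sup>2 \<le> M\<^sup>2 / (a\<^sup>2 * X)"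
    if "cmod u \<le> M" "cmod v \<le> M" for u v M
    using power2_norm_diff_div_le[OF that, of "4 * (a\<^sup>2 * X)"] assms unfolding gap by simp
  have ratio: "(1 + X) / X \<le> 4 / 3"
    using assms(2) by (simp add: field_simps)
  show "(cmod (exp (lp * t) - exp (lm * t)))\<^sup>2 / (cmod (lp - lm))\<^sup>2 \<le> exp (- 2 * a * t) / (a\<^sup>2 * X)"
    using quotient [of _ e] norm_exps e by simp
  have "(a * sqrt (1 + X) * e)\<^sup>2 / (a\<^sup>2 * X) = (1 + X) / X * e\<^sup>2"
    using assms by (simp add: power_mult_distrib field_simps)
  also have "\<dots> \<le> 4 / 3 * exp (- 2 * a * t)"
    unfolding e(2) [symmetric] using ratio by (intro mult_right_mono) simp_all
  finally have bound: "(a * sqrt (1 + X) * e)\<^sup>2 / (a\<^sup>2 * X) \<le> 4 / 3 * exp (- 2 * a * t)" .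
  show "(cmod (lp * exp (lp * t) - lm * exp (lm * t)))\<^sup>2 / (cmod (lp - lm))\<^sup>2 \<le> 4 / 3 * exp (- 2 * a * t)"
    by (rule order_trans [OF quotient bound]) (simp_all add: norm_mult norm_roots norm_exps del: norm_exp_eq_Re)
  show "(cmod (lp * exp (lm * t) - lm * exp (lp * t)))\<^sup>2 / (cmod (lp - lm))\<^sup>2 \<le> 4 / 3 * exp (- 2 * a * t)"
    by (rule order_trans [OF quotient bound]) (simp_all add: norm_mult norm_roots norm_exps del: norm_exp_eq_Re)
  have "(a\<^sup>2 * (1 + X) * e)\<^sup>2 / (a\<^sup>2 * X) = (1 + X) / X * (a\<^sup>2 * (1 + X)) * e\<^sup>2"
    using assms by (simp add: power2_eq_square field_simps)
  also have "\<dots> \<le> 4 / 3 * (a\<^sup>2 * (1 + X)) * exp (- 2 * a * t)"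
    unfolding e(2) [symmetric] using ratio assms by (intro mult_right_mono) simp_all
  finally have bound: "(a\<^sup>2 * (1 + X) * e)\<^sup>2 / (a\<^sup>2 * X) \<le> 4 / 3 * (a\<^sup>2 * (1 + X)) * exp (- 2 * a * t)" .
  have "cmod lp * cmod lm = a\<^sup>2 * (1 + X)"
    using assms(2) by (simp add: norm_roots power2_eq_square mult_ac)
  then show "(cmod (lp * (lm * exp (lm * t)) - lm * (lp * exp (lp * t))))\<^sup>2 / (cmod (lp - lm))\<^sup>2
      \<le> 4 / 3 * (a\<^sup>2 * (1 + X)) * exp (- 2 * a * t)"
    by (intro order_trans [OF quotient bound])
      (simp_all add: norm_mult mult.assoc [symmetric] norm_exps mult.commute [of "cmod lm"] del: norm_exp_eq_Re)
qed

lemma pw_zero_exponent [simp]: "pw r 0 = 1"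
  by (simp add: pw_def)

lemma pw_nonneg: "0 \<le> pw r e"
  by (simp add: pw_def)

lemma pw_le_one: "0 \<le> r \<Longrightarrow> r \<le> 1 \<Longrightarrow> 0 \<le> e \<Longrightarrow> pw r e \<le> 1"
  by (simp add: pw_def powr_le1)

lemma lam_conjugate_form:
  fixes \<alpha> \<theta> \<delta> r :: real
  defines "X \<equiv> 4 * pw r (2 * (\<alpha> - 2 * \<theta>)) * (1 + pw r (2 * \<delta>)) - 1"
    and "a \<equiv> pw r (2 * \<theta>) / (2 * (1 + pw r (2 * \<delta>)))"
  assumes "0 \<le> X"
  shows "lam_plus \<alpha> \<theta> \<delta> r = complex_of_real a * (- 1 + \<i> * complex_of_real (sqrt X))"
    and "lam_minus \<alpha> \<theta> \<delta> r = complex_of_real a * (- 1 - \<i> * complex_of_real (sqrt X))"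
  using assms by (simp_all add: lam_plus_def lam_minus_def csqrt_of_real)

text \<open>With \<open>A = |\<xi>|^(2\<theta>)\<close> and \<open>A\<^sup>2 * P = |\<xi>|^(2\<alpha>)\<close>, the real part \<open>-a\<close> of the roots
  satisfies \<open>A / 4 \<le> a\<close> and the gap satisfies \<open>|\<lambda>\<^sub>+ - \<lambda>\<^sub>-|\<^sup>2 = 4 a\<^sup>2 X \<ge> 3/2 * A\<^sup>2 * P\<close>.\<close>

lemma lam_quotients_le:
  fixes \<alpha> \<theta> \<delta> r t :: real
  defines "lp \<equiv> lam_plus \<alpha> \<theta> \<delta> r" and "lm \<equiv> lam_minus \<alpha> \<theta> \<delta> r"
    and "A \<equiv> pw r (2 * \<theta>)" and "P \<equiv> pw r (2 * (\<alpha> - 2 * \<theta>))" and "W \<equiv> pw r (2 * \<delta>)"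
  assumes A: "0 < A" and P: "1 \<le> P" and W: "0 \<le> W" "W \<le> 1" and t: "0 \<le> t"
  shows "(cmod (exp (lp * t) - exp (lm * t)))\<^sup>2 / (cmod (lp - lm))\<^sup>2 \<le> 3 * (exp (- (1/2) * t * A) / (A\<^sup>2 * P))"
    and "(cmod (lp * exp (lp * t) - lm * exp (lm * t)))\<^sup>2 / (cmod (lp - lm))\<^sup>2 \<le> 3 * exp (- (1/2) * t * A)"
    and "(cmod (lp * exp (lm * t) - lm * exp (lp * t)))\<^sup>2 / (cmod (lp - lm))\<^sup>2 \<le> 3 * exp (- (1/2) * t * A)"
    and "(cmod (lp * (lm * exp (lm * t)) - lm * (lp * exp (lp * t))))\<^sup>2 / (cmod (lp - lm))\<^sup>2
           \<le> 3 * (A\<^sup>2 * P * exp (- (1/2) * t * A))"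
proof -
  define X where "X = 4 * P * (1 + W) - 1"
  define a where "a = A / (2 * (1 + W))"
  have "1 * 1 \<le> P * (1 + W)"
    using P W by (intro mult_mono) auto
  then have X: "3 \<le> X"
    by (simp add: X_def)
  have a: "0 < a"
    using A W by (simp add: a_def)
  have roots: "lp = complex_of_real a * (- 1 + \<i> * complex_of_real (sqrt X))"
      "lm = complex_of_real a * (- 1 - \<i> * complex_of_real (sqrt X))"
    using lam_conjugate_form[where \<alpha>=\<alpha> and \<theta>=\<theta> and \<delta>=\<delta> and r=r] X
    by (simp_all add: lp_def lm_def X_def a_def A_def P_def W_def)
  note Q = conjugate_roots_quotients_le[OF a X, of t, folded roots]
  let ?E = "exp (- (1/2) * t * A)"
  have "A \<le> 4 * a"
    using A W by (simp add: a_def field_simps)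
  then have "A * t \<le> 4 * a * t"
    using t by (rule mult_right_mono)
  then have decay: "exp (- 2 * a * t) \<le> ?E"
    by (simp add: mult_ac)
  have "(A / (2 * (1 + W)))\<^sup>2 * (4 * P * (1 + W)) * (1 + W) = A\<^sup>2 * P"
    using W(1) by (simp add: power2_eq_square divide_simps) (simp add: algebra_simps)
  then have S: "a\<^sup>2 * (1 + X) * (1 + W) = A\<^sup>2 * P"
    by (simp add: a_def X_def)
  have "0 \<le> a\<^sup>2 * (1 + X)"
    using X by simp
  then have "a\<^sup>2 * (1 + X) * 1 \<le> a\<^sup>2 * (1 + X) * (1 + W)" "a\<^sup>2 * (1 + X) * (1 + W) \<le> a\<^sup>2 * (1 + X) * 2"
    using W by (intro mult_left_mono; simp)+
  then have size: "a\<^sup>2 * (1 + X) \<le> A\<^sup>2 * P" "A\<^sup>2 * P / 2 \<le> a\<^sup>2 * (1 + X)"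
    unfolding S by simp_all
  have "0 < A\<^sup>2 * P" "0 \<le> ?E"
    using A P by simp_all
  have "a\<^sup>2 * (3 / 4 * (1 + X)) \<le> a\<^sup>2 * X"
    using X by (intro mult_left_mono) auto
  then have "3 / 8 * (A\<^sup>2 * P) \<le> a\<^sup>2 * X"
    using size(2) by (simp add: algebra_simps)
  then have "exp (- 2 * a * t) / (a\<^sup>2 * X) \<le> ?E / (3 / 8 * (A\<^sup>2 * P))"
    using decay \<open>0 < A\<^sup>2 * P\<close> \<open>0 \<le> ?E\<close> by (intro frac_le) auto
  also have "\<dots> = 8 / 3 * (?E / (A\<^sup>2 * P))"
    by simp
  also have "\<dots> \<le> 3 * (?E / (A\<^sup>2 * P))"
    using \<open>0 < A\<^sup>2 * P\<close> by (intro mult_right_mono) simp_all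
  finally show "(cmod (exp (lp * t) - exp (lm * t)))\<^sup>2 / (cmod (lp - lm))\<^sup>2 \<le> 3 * (?E / (A\<^sup>2 * P))"
    by (rule order_trans [OF Q(1)])
  have "4 / 3 * exp (- 2 * a * t) \<le> 3 * ?E"
    using decay \<open>0 \<le> ?E\<close> by linarith
  then show "(cmod (lp * exp (lp * t) - lm * exp (lm * t)))\<^sup>2 / (cmod (lp - lm))\<^sup>2 \<le> 3 * ?E"
    and "(cmod (lp * exp (lm * t) - lm * exp (lp * t)))\<^sup>2 / (cmod (lp - lm))\<^sup>2 \<le> 3 * ?E"
    by (rule order_trans [OF Q(2)], rule order_trans [OF Q(3)])
  have "4 / 3 * (a\<^sup>2 * (1 + X)) * exp (- 2 * a * t) \<le> 4 / 3 * (A\<^sup>2 * P) * ?E"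
    by (rule mult_mono) (use size(1) decay \<open>0 < A\<^sup>2 * P\<close> in \<open>auto simp: mult.commute\<close>)
  also have "\<dots> \<le> 3 * (A\<^sup>2 * P * ?E)"
  proof -
    have "0 \<le> A\<^sup>2 * P * ?E"
      using \<open>0 < A\<^sup>2 * P\<close> by (rule mult_nonneg_nonneg [OF less_imp_le exp_ge_zero])
    then show ?thesis
      by linarith
  qed
  finally show "(cmod (lp * (lm * exp (lm * t)) - lm * (lp * exp (lp * t))))\<^sup>2 / (cmod (lp - lm))\<^sup>2
      \<le> 3 * (A\<^sup>2 * P * ?E)"
    by (rule order_trans [OF Q(4)])
qed

lemma lam_quotients_powr_le:
  fixes \<alpha> \<theta> \<delta> r t :: real
  assumes "0 \<le> \<delta>" "\<alpha> \<le> 2 * \<theta>" "0 < r" "r < 1" "0 \<le> t"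
  defines "lp \<equiv> lam_plus \<alpha> \<theta> \<delta> r" and "lm \<equiv> lam_minus \<alpha> \<theta> \<delta> r"
    and "E \<equiv> exp (- (1/2) * t * r powr (2 * \<theta>))"
  shows "(cmod (exp (lp * t) - exp (lm * t)))\<^sup>2 / (cmod (lp - lm))\<^sup>2 \<le> 3 * (r powr (- 2 * \<alpha>) * E)"
    and "(cmod (lp * exp (lp * t) - lm * exp (lm * t)))\<^sup>2 / (cmod (lp - lm))\<^sup>2 \<le> 3 * (r powr 0 * E)"
    and "(cmod (lp * exp (lm * t) - lm * exp (lp * t)))\<^sup>2 / (cmod (lp - lm))\<^sup>2 \<le> 3 * (r powr 0 * E)"
    and "(cmod (lp * (lm * exp (lm * t)) - lm * (lp * exp (lp * t))))\<^sup>2 / (cmod (lp - lm))\<^sup>2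
           \<le> 3 * (r powr (2 * \<alpha>) * E)"
proof -
  have pw: "pw r e = r powr e" for e
    using assms(3) by (simp add: pw_def)
  have "1 \<le> r powr (2 * (\<alpha> - 2 * \<theta>))"
    using assms(2-4) powr_mono2' [of "2 * (\<alpha> - 2 * \<theta>)" r 1] by simp
  moreover have "0 \<le> r powr (2 * \<delta>)" "r powr (2 * \<delta>) \<le> 1"
    using assms(1,3,4) by (simp_all add: powr_le1)
  moreover have "0 < r powr (2 * \<theta>)"
    using assms(3) by simp
  ultimately have Q: "(cmod (exp (lp * t) - exp (lm * t)))\<^sup>2 / (cmod (lp - lm))\<^sup>2
        \<le> 3 * (E / ((r powr (2 * \<theta>))\<^sup>2 * r powr (2 * (\<alpha> - 2 * \<theta>))))"
      "(cmod (lp * exp (lp * t) - lm * exp (lm * t)))\<^sup>2 / (cmod (lp - lm))\<^sup>2 \<le> 3 * E"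
      "(cmod (lp * exp (lm * t) - lm * exp (lp * t)))\<^sup>2 / (cmod (lp - lm))\<^sup>2 \<le> 3 * E"
      "(cmod (lp * (lm * exp (lm * t)) - lm * (lp * exp (lp * t))))\<^sup>2 / (cmod (lp - lm))\<^sup>2
        \<le> 3 * ((r powr (2 * \<theta>))\<^sup>2 * r powr (2 * (\<alpha> - 2 * \<theta>)) * E)"
    using lam_quotients_le [where \<alpha> = \<alpha> and \<theta> = \<theta> and \<delta> = \<delta> and r = r and t = t] assms(5)
    unfolding lp_def lm_def E_def pw by simp_all
  have "(r powr (2 * \<theta>))\<^sup>2 * r powr (2 * (\<alpha> - 2 * \<theta>)) = r powr (2 * \<alpha>)"
    using assms(3) by (simp add: power2_eq_square powr_add [symmetric])
  note Q = Q [unfolded this]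
  show "(cmod (exp (lp * t) - exp (lm * t)))\<^sup>2 / (cmod (lp - lm))\<^sup>2 \<le> 3 * (r powr (- 2 * \<alpha>) * E)"
    using Q(1) assms(3) by (simp add: powr_minus field_simps)
  show "(cmod (lp * exp (lp * t) - lm * exp (lm * t)))\<^sup>2 / (cmod (lp - lm))\<^sup>2 \<le> 3 * (r powr 0 * E)"
    and "(cmod (lp * exp (lm * t) - lm * exp (lp * t)))\<^sup>2 / (cmod (lp - lm))\<^sup>2 \<le> 3 * (r powr 0 * E)"
    and "(cmod (lp * (lm * exp (lm * t)) - lm * (lp * exp (lp * t))))\<^sup>2 / (cmod (lp - lm))\<^sup>2
           \<le> 3 * (r powr (2 * \<alpha>) * E)"
    using Q(2-4) assms(3) by simp_all
qed

lemma chi_weighted_quotient_le: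
  fixes \<xi> :: "'a::real_normed_vector" and N D k E \<epsilon> :: real
  assumes "0 < norm \<xi> \<Longrightarrow> norm \<xi> < \<epsilon> \<Longrightarrow> N / D \<le> 3 * (norm \<xi> powr k * E)"
    and "norm \<xi> = 0 \<Longrightarrow> D = 0" and "0 \<le> E"
  shows "N / D * norm \<xi> ^ (2 * m) * (chi \<epsilon> \<xi>)\<^sup>2
    \<le> 3 * (indicator {x. norm x < \<epsilon>} \<xi> * norm \<xi> powr (2 * real m + k) * E)"
proof (cases "0 < norm \<xi> \<and> norm \<xi> < \<epsilon>")
  case True
  then have "norm \<xi> ^ (2 * m) = norm \<xi> powr (2 * real m)"
    using powr_realpow [of "norm \<xi>" "2 * m"] by simp
  then have "N / D * norm \<xi> ^ (2 * m) \<le> 3 * (norm \<xi> powr k * E) * norm \<xi> powr (2 * real m)"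
    using True assms(1) by (simp only:) (rule mult_right_mono; simp)
  also have "\<dots> = 3 * (norm \<xi> powr (2 * real m + k) * E)"
    by (simp add: powr_add)
  finally show ?thesis
    using True by (simp add: chi_def)
next
  case False
  then have "norm \<xi> = 0 \<or> \<not> norm \<xi> < \<epsilon>"
    by auto
  then show ?thesis
    using assms(2,3) by (auto simp: chi_def)
qed

lemma chi_weighted_le:
  fixes \<xi> :: "'a::real_normed_vector" and Q E \<epsilon> :: real
  assumes "norm \<xi> < \<epsilon> \<Longrightarrow> Q \<le> 3 * E" and "0 \<le> Q" and "\<epsilon> \<le> 1"
  shows "Q * norm \<xi> ^ (2 * m) * (chi \<epsilon> \<xi>)\<^sup>2 \<le> 3 * (indicator {x. norm x < \<epsilon>} \<xi> * E)"
proof (cases "norm \<xi> < \<epsilon>")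
  case True
  then have "Q * norm \<xi> ^ (2 * m) \<le> Q * 1"
    using assms by (intro mult_left_mono power_le_one) auto
  then show ?thesis
    using True assms(1) by (simp add: chi_def)
qed (simp add: chi_def)

text \<open>At the origin the roots coincide, so there the integrands are of the form \<open>x / 0 = 0\<close>.\<close>

lemma lam_at_origin: "\<theta> \<noteq> 0 \<Longrightarrow> lam_plus \<alpha> \<theta> \<delta> 0 = 0 \<and> lam_minus \<alpha> \<theta> \<delta> 0 = 0"
  by (simp add: lam_plus_def lam_minus_def pw_def)

lemma lam_integrands_le:
  fixes \<xi> :: "'a::real_normed_vector" and \<alpha> \<theta> \<delta> \<epsilon> t :: real
  assumes "0 \<le> \<delta>" "\<alpha> \<le> 2 * \<theta>" "0 < \<theta>" "\<epsilon> \<le> 1" "0 \<le> t"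
  defines "lp \<equiv> lam_plus \<alpha> \<theta> \<delta> (norm \<xi>)" and "lm \<equiv> lam_minus \<alpha> \<theta> \<delta> (norm \<xi>)"
    and "J \<equiv> indicator {x. norm x < \<epsilon>} \<xi>" and "E \<equiv> exp (- (1/2) * t * norm \<xi> powr (2 * \<theta>))"
  shows "(cmod (exp (lp * t) - exp (lm * t)))\<^sup>2 / (cmod (lp - lm))\<^sup>2 * norm \<xi> ^ (2 * m) * (chi \<epsilon> \<xi>)\<^sup>2
           \<le> 3 * (J * norm \<xi> powr (2 * real m + - 2 * \<alpha>) * E)"
    and "(cmod (lp * exp (lp * t) - lm * exp (lm * t)))\<^sup>2 / (cmod (lp - lm))\<^sup>2 * norm \<xi> ^ (2 * m) * (chi \<epsilon> \<xi>)\<^sup>2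
           \<le> 3 * (J * norm \<xi> powr (2 * real m + 0) * E)"
    and "(cmod (lp * exp (lm * t) - lm * exp (lp * t)))\<^sup>2 / (cmod (lp - lm))\<^sup>2 * norm \<xi> ^ (2 * m) * (chi \<epsilon> \<xi>)\<^sup>2
           \<le> 3 * (J * norm \<xi> powr (2 * real m + 0) * E)"
    and "(cmod (lp * (lm * exp (lm * t)) - lm * (lp * exp (lp * t))))\<^sup>2 / (cmod (lp - lm))\<^sup>2 * norm \<xi> ^ (2 * m) * (chi \<epsilon> \<xi>)\<^sup>2
           \<le> 3 * (J * norm \<xi> powr (2 * real m + 2 * \<alpha>) * E)"
  unfolding J_def lp_def lm_def E_def
  by (rule chi_weighted_quotient_le;
      use lam_quotients_powr_le [OF assms(1,2) _ _ assms(5)] lam_at_origin assms(3,4) in auto)+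

text \<open>Since \<open>pw r 0 = 1\<close> also for \<open>r = 0\<close>, for \<open>\<alpha> = \<theta> = 0\<close> the roots are bounded away from \<open>0\<close>
  on the whole ball, including the origin.\<close>

lemma lam_integrands_le_degenerate:
  fixes \<xi> :: "'a::real_normed_vector" and \<delta> \<epsilon> t :: real
  assumes "0 \<le> \<delta>" "\<epsilon> \<le> 1" "0 \<le> t"
  defines "lp \<equiv> lam_plus 0 0 \<delta> (norm \<xi>)" and "lm \<equiv> lam_minus 0 0 \<delta> (norm \<xi>)"
    and "J \<equiv> indicator {x. norm x < \<epsilon>} \<xi>"
  shows "(cmod (exp (lp * t) - exp (lm * t)))\<^sup>2 / (cmod (lp - lm))\<^sup>2 * norm \<xi> ^ (2 * m) * (chi \<epsilon> \<xi>)\<^sup>2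
           \<le> 3 * (J * exp (- t / 2))"
    and "(cmod (lp * exp (lp * t) - lm * exp (lm * t)))\<^sup>2 / (cmod (lp - lm))\<^sup>2 * norm \<xi> ^ (2 * m) * (chi \<epsilon> \<xi>)\<^sup>2
           \<le> 3 * (J * exp (- t / 2))"
    and "(cmod (lp * exp (lm * t) - lm * exp (lp * t)))\<^sup>2 / (cmod (lp - lm))\<^sup>2 * norm \<xi> ^ (2 * m) * (chi \<epsilon> \<xi>)\<^sup>2
           \<le> 3 * (J * exp (- t / 2))"
    and "(cmod (lp * (lm * exp (lm * t)) - lm * (lp * exp (lp * t))))\<^sup>2 / (cmod (lp - lm))\<^sup>2 * norm \<xi> ^ (2 * m) * (chi \<epsilon> \<xi>)\<^sup>2
           \<le> 3 * (J * exp (- t / 2))"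
  unfolding J_def lp_def lm_def
  by (rule chi_weighted_le;
      (rule lam_quotients_le [where \<alpha> = 0 and \<theta> = 0, simplified, unfolded minus_divide_left])?;
      use assms(1-3) in \<open>auto intro: pw_le_one simp: pw_nonneg\<close>)+

section \<open>Decay of the integrals\<close>

lemma deriv_exp_diff:
  "(deriv ^^ 1) (\<lambda>s::complex. exp (lp * s) - exp (lm * s)) z = lp * exp (lp * z) - lm * exp (lm * z)"
  by (simp, rule DERIV_imp_deriv) (auto intro!: derivative_eq_intros)

lemma deriv_exp_combination:
  "(deriv ^^ 1) (\<lambda>s::complex. lp * exp (lm * s) - lm * exp (lp * s)) z
     = lp * (lm * exp (lm * z)) - lm * (lp * exp (lp * z))"
  by (simp, rule DERIV_imp_deriv) (auto intro!: derivative_eq_intros)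

lemma I1_0_decay:
  fixes \<gamma> :: "'n::finite \<Rightarrow> nat" and \<alpha> \<theta> \<delta> \<epsilon> :: real
  assumes "0 \<le> \<delta>" "\<alpha> \<le> 2 * \<theta>" "0 < \<theta>" "\<epsilon> \<le> 1"
    and "2 * \<alpha> < real CARD('n) + 2 * real (mi_len \<gamma>)"
  shows "\<exists>C. \<forall>t\<ge>0. I1 \<alpha> \<theta> \<delta> \<epsilon> \<gamma> 0 t
           \<le> C * (1 + t) powr (- (1 / \<theta>) * (real CARD('n) / 4 + real (mi_len \<gamma>) / 2 - \<alpha> / 2))"
proof -
  have "0 < real CARD('n)"
    by simp
  then have p: "- real CARD('n) < 2 * real (mi_len \<gamma>) + - 2 * \<alpha>"
    using assms by linarith
  have "\<exists>C. \<forall>t\<ge>0. sqrt (I1sq \<alpha> \<theta> \<delta> \<epsilon> \<gamma> 0 t)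
      \<le> C * (1 + t) powr (- (DIM(real^'n) + (2 * real (mi_len \<gamma>) + - 2 * \<alpha>)) / (4 * \<theta>))"
    unfolding I1sq_def Let_def funpow_0
    by (rule sqrt_integral_power_exp_decay [where \<kappa> = "1/2" and c = 3 and \<epsilon> = \<epsilon>])
      (use assms lam_integrands_le(1) p in auto)
  moreover have "- (DIM(real^'n) + (2 * real (mi_len \<gamma>) + - 2 * \<alpha>)) / (4 * \<theta>)
      = - (1 / \<theta>) * (real CARD('n) / 4 + real (mi_len \<gamma>) / 2 - \<alpha> / 2)"
    using assms(3) by (simp add: field_simps)
  ultimately show ?thesis
    by (simp add: I1_def)
qed

lemma I1_1_decay:
  fixes \<gamma> :: "'n::finite \<Rightarrow> nat" and \<alpha> \<theta> \<delta> \<epsilon> :: real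
  assumes "0 \<le> \<delta>" "\<alpha> \<le> 2 * \<theta>" "0 < \<theta>" "\<epsilon> \<le> 1"
  shows "\<exists>C. \<forall>t\<ge>0. I1 \<alpha> \<theta> \<delta> \<epsilon> \<gamma> 1 t
           \<le> C * (1 + t) powr (- (1 / \<theta>) * (real CARD('n) / 4 + real (mi_len \<gamma>) / 2))"
proof -
  have "0 < real CARD('n)"
    by simp
  then have p: "- real CARD('n) < 2 * real (mi_len \<gamma>) + 0"
    using assms by linarith
  have "\<exists>C. \<forall>t\<ge>0. sqrt (I1sq \<alpha> \<theta> \<delta> \<epsilon> \<gamma> 1 t)
      \<le> C * (1 + t) powr (- (DIM(real^'n) + (2 * real (mi_len \<gamma>) + 0)) / (4 * \<theta>))"
    unfolding I1sq_def Let_def deriv_exp_diff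
    by (rule sqrt_integral_power_exp_decay [where \<kappa> = "1/2" and c = 3 and \<epsilon> = \<epsilon>])
      (use assms lam_integrands_le(2) p in auto)
  moreover have "- (DIM(real^'n) + (2 * real (mi_len \<gamma>) + 0)) / (4 * \<theta>)
      = - (1 / \<theta>) * (real CARD('n) / 4 + real (mi_len \<gamma>) / 2)"
    using assms(3) by (simp add: field_simps)
  ultimately show ?thesis
    by (simp add: I1_def)
qed

lemma I0_0_decay:
  fixes \<gamma> :: "'n::finite \<Rightarrow> nat" and \<alpha> \<theta> \<delta> \<epsilon> :: real
  assumes "0 \<le> \<delta>" "\<alpha> \<le> 2 * \<theta>" "0 < \<theta>" "\<epsilon> \<le> 1"
  shows "\<exists>C. \<forall>t\<ge>0. I0 \<alpha> \<theta> \<delta> \<epsilon> \<gamma> 0 t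
           \<le> C * (1 + t) powr (- (1 / \<theta>) * (real CARD('n) / 4 + real (mi_len \<gamma>) / 2))"
proof -
  have "0 < real CARD('n)"
    by simp
  then have p: "- real CARD('n) < 2 * real (mi_len \<gamma>) + 0"
    using assms by linarith
  have "\<exists>C. \<forall>t\<ge>0. sqrt (I0sq \<alpha> \<theta> \<delta> \<epsilon> \<gamma> 0 t)
      \<le> C * (1 + t) powr (- (DIM(real^'n) + (2 * real (mi_len \<gamma>) + 0)) / (4 * \<theta>))"
    unfolding I0sq_def Let_def funpow_0
    by (rule sqrt_integral_power_exp_decay [where \<kappa> = "1/2" and c = 3 and \<epsilon> = \<epsilon>])
      (use assms lam_integrands_le(3) p in auto)
  moreover have "- (DIM(real^'n) + (2 * real (mi_len \<gamma>) + 0)) / (4 * \<theta>)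
      = - (1 / \<theta>) * (real CARD('n) / 4 + real (mi_len \<gamma>) / 2)"
    using assms(3) by (simp add: field_simps)
  ultimately show ?thesis
    by (simp add: I0_def)
qed

lemma I0_1_decay:
  fixes \<gamma> :: "'n::finite \<Rightarrow> nat" and \<alpha> \<theta> \<delta> \<epsilon> :: real
  assumes "0 \<le> \<delta>" "\<alpha> \<le> 2 * \<theta>" "0 < \<theta>" "\<epsilon> \<le> 1"
    and "0 \<le> \<alpha>"
  shows "\<exists>C. \<forall>t\<ge>0. I0 \<alpha> \<theta> \<delta> \<epsilon> \<gamma> 1 t
           \<le> C * (1 + t) powr (- (1 / \<theta>) * (real CARD('n) / 4 + real (mi_len \<gamma>) / 2 + \<alpha> / 2))"
proof -
  have "0 < real CARD('n)"
    by simp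
  then have p: "- real CARD('n) < 2 * real (mi_len \<gamma>) + 2 * \<alpha>"
    using assms by linarith
  have "\<exists>C. \<forall>t\<ge>0. sqrt (I0sq \<alpha> \<theta> \<delta> \<epsilon> \<gamma> 1 t)
      \<le> C * (1 + t) powr (- (DIM(real^'n) + (2 * real (mi_len \<gamma>) + 2 * \<alpha>)) / (4 * \<theta>))"
    unfolding I0sq_def Let_def deriv_exp_combination
    by (rule sqrt_integral_power_exp_decay [where \<kappa> = "1/2" and c = 3 and \<epsilon> = \<epsilon>])
      (use assms lam_integrands_le(4) p in auto)
  moreover have "- (DIM(real^'n) + (2 * real (mi_len \<gamma>) + 2 * \<alpha>)) / (4 * \<theta>)
      = - (1 / \<theta>) * (real CARD('n) / 4 + real (mi_len \<gamma>) / 2 + \<alpha> / 2)"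
    using assms(3) by (simp add: field_simps)
  ultimately show ?thesis
    by (simp add: I0_def)
qed

lemma I_degenerate_exp_decay:
  fixes \<gamma> :: "'n::finite \<Rightarrow> nat" and \<delta> \<epsilon> :: real
  assumes "0 \<le> \<delta>" "\<epsilon> \<le> 1"
  shows "\<exists>C. \<forall>t\<ge>0. \<forall>j\<in>{0,1}.
           I0 0 0 \<delta> \<epsilon> \<gamma> j t \<le> C * exp (- t / 4) \<and> I1 0 0 \<delta> \<epsilon> \<gamma> j t \<le> C * exp (- t / 4)"
proof -
  define V where "V = measure lborel (ball (0::real^'n) \<epsilon>)"
  have bound: "sqrt (LINT \<xi>|lborel. F \<xi>) \<le> sqrt (3 * V) * exp (- t / 4)"
    if "\<And>\<xi>. F \<xi> \<le> 3 * (indicator {x. norm x < \<epsilon>} \<xi> * exp (- t / 2))"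
    for t and F :: "real^'n \<Rightarrow> real"
  proof -
    have "(LINT \<xi>|lborel. F \<xi>) \<le> 3 * exp (- t / 2) * V"
      unfolding V_def using that by (intro integral_le_measure_ball) (auto simp: mult_ac)
    then have "sqrt (LINT \<xi>|lborel. F \<xi>) \<le> sqrt (3 * V) * sqrt (exp (- t / 2))"
      by (simp add: real_sqrt_mult [symmetric] mult_ac)
    also have "exp (- t / 2) = (exp (- t / 4))\<^sup>2"
      by (simp add: power2_eq_square exp_add [symmetric])
    finally show ?thesis
      by simp
  qed
  show ?thesis
  proof (intro exI [of _ "sqrt (3 * V)"] allI impI ballI)
    fix t :: real and j :: nat
    assume t: "0 \<le> t" and "j \<in> {0, 1}"
    then consider "j = 0" | "j = 1"
      by blast
    then show "I0 0 0 \<delta> \<epsilon> \<gamma> j t \<le> sqrt (3 * V) * exp (- t / 4) \<and> I1 0 0 \<delta> \<epsilon> \<gamma> j t \<le> sqrt (3 * V) * exp (- t / 4)"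
    proof cases
      case 1
      show ?thesis
        unfolding 1 I0_def I1_def I0sq_def I1sq_def Let_def funpow_0
        by (intro conjI bound lam_integrands_le_degenerate [OF assms t])
    next
      case 2
      show ?thesis
        unfolding 2 I0_def I1_def I0sq_def I1sq_def Let_def deriv_exp_diff deriv_exp_combination
        by (intro conjI bound lam_integrands_le_degenerate [OF assms t])
    qed
  qed
qed

theorem lemma2p6:
  fixes \<gamma> :: "'n::finite \<Rightarrow> nat"
    and \<delta> \<alpha> \<theta> \<epsilon> :: real
  assumes "\<delta> \<ge> 0" and "\<alpha> \<ge> 0" and "\<alpha> / 2 \<le> \<theta>" and "\<theta> \<le> \<alpha>"
    and "0 < \<epsilon>" and "\<epsilon> < 1"
  defines "n \<equiv> real CARD('n)" and "g \<equiv> real (mi_len \<gamma>)"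
  shows "(\<theta> > 0 \<longrightarrow>
           ((n + 2 * g > 2 * \<alpha> \<longrightarrow>
              (\<exists>C. \<forall>t\<ge>0. I1 \<alpha> \<theta> \<delta> \<epsilon> \<gamma> 0 t \<le> C * (1 + t) powr (-(1/\<theta>) * (n/4 + g/2 - \<alpha>/2)))) \<and>
            (\<exists>C. \<forall>t\<ge>0. I1 \<alpha> \<theta> \<delta> \<epsilon> \<gamma> 1 t \<le> C * (1 + t) powr (-(1/\<theta>) * (n/4 + g/2))) \<and>
            (\<exists>C. \<forall>t\<ge>0. I0 \<alpha> \<theta> \<delta> \<epsilon> \<gamma> 0 t \<le> C * (1 + t) powr (-(1/\<theta>) * (n/4 + g/2))) \<and>
            (\<exists>C. \<forall>t\<ge>0. I0 \<alpha> \<theta> \<delta> \<epsilon> \<gamma> 1 t \<le> C * (1 + t) powr (-(1/\<theta>) * (n/4 + g/2 + \<alpha>/2)))))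
       \<and> (\<alpha> = 0 \<and> \<theta> = 0 \<longrightarrow>
           (\<exists>C. \<forall>t\<ge>0. \<forall>j\<in>{0,1}.
              I0 \<alpha> \<theta> \<delta> \<epsilon> \<gamma> j t \<le> C * exp (-t/4) \<and> I1 \<alpha> \<theta> \<delta> \<epsilon> \<gamma> j t \<le> C * exp (-t/4)))"
proof -
  have \<alpha>\<theta>: "\<alpha> \<le> 2 * \<theta>" and \<epsilon>: "\<epsilon> \<le> 1"
    using assms(3,6) by simp_all
  show ?thesis
    unfolding n_def g_def
  proof (intro conjI impI)
    assume "\<alpha> = 0 \<and> \<theta> = 0"
    then show "\<exists>C. \<forall>t\<ge>0. \<forall>j\<in>{0,1}.
        I0 \<alpha> \<theta> \<delta> \<epsilon> \<gamma> j t \<le> C * exp (-t/4) \<and> I1 \<alpha> \<theta> \<delta> \<epsilon> \<gamma> j t \<le> C * exp (-t/4)"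
      using I_degenerate_exp_decay [OF assms(1) \<epsilon>, of \<gamma>] by (simp only:)
  qed (use I1_0_decay [OF assms(1) \<alpha>\<theta> _ \<epsilon>] I1_1_decay [OF assms(1) \<alpha>\<theta> _ \<epsilon>]
      I0_0_decay [OF assms(1) \<alpha>\<theta> _ \<epsilon>] I0_1_decay [OF assms(1) \<alpha>\<theta> _ \<epsilon> assms(2)] in blast)+
qed

end
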